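(* Let $n,m,k,l\ge0$ with $n+m=k+l$, and let $w_1,\dots,w_p$, where $p=\min(n,m,k,l)+1$, be the minimal length representatives of the double cosets $(S_k\times S_l)\backslash S_{n+m}/(S_n\times S_m)$. Then $A_{n+m}$, as an $(A_k\otimes A_l,A_n\otimes A_m)$-bimodule (via $\gamma_{k,l}$ on the left and $\gamma_{n,m}$ on the right), is isomorphic to the direct sum of the sub-bimodules of $A_{n+m}$ generated by $Y_{w_1},\dots,Y_{w_p}$.
   Context: $A_j$ is the nilCoxeter algebra: the unital $\mathbb{Q}$-algebra generated by $Y_1,\dots,Y_{j-1}$ with relations $Y_i^2=0$, $Y_iY_r=Y_rY_i$ for $|i-r|>1$, $Y_iY_{i+1}Y_i=Y_{i+1}Y_iY_{i+1}$. For $w\in S_j$ with reduced expression $w=s_{i_1}\cdots s_{i_r}$, $Y_w=Y_{i_1}\cdots Y_{i_r}$ (well defined). $\gamma_{a,b}:A_a\otimes A_b\to A_{a+b}$ is given by $\gamma_{a,b}(Y_i\otimes1)=Y_i$, $\gamma_{a,b}(1\otimes Y_i)=Y_{a+i}$; $S_a\times S_b\subset S_{a+b}$ is the standard Young subgroup. *)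

theory Defs
  imports "HOL-Combinatorics.Combinatorics"
begin

text \<open>Elements of the free associative algebra over Q on generators Y_1, Y_2, ...
  are represented as functions from words (lists of generator indices) to their
  coefficients.\<close>

type_synonym fa = "nat list \<Rightarrow> rat"

definition wd :: "nat list \<Rightarrow> fa" where
  "wd u = (\<lambda>v. if v = u then 1 else 0)"

definition fa_mult :: "fa \<Rightarrow> fa \<Rightarrow> fa" where
  "fa_mult f g = (\<lambda>w. \<Sum>p\<in>{(u, v). u @ v = w}. f (fst p) * g (snd p))"

definition lspan :: "fa set \<Rightarrow> fa set" where
  "lspan B = {x. \<exists>S c. finite S \<and> S \<subseteq> B \<and> x = (\<lambda>w. \<Sum>b\<in>S. c b * b w)}"

definition gens :: "nat \<Rightarrow> nat set" where
  "gens j = {i. 1 \<le> i \<and> i < j}"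

definition ncfree :: "nat \<Rightarrow> fa set" where
  "ncfree j = lspan (wd ` {u. set u \<subseteq> gens j})"

text \<open>Defining relations of the nilCoxeter algebra A_j (as elements that are set to 0).\<close>
definition relators :: "nat \<Rightarrow> fa set" where
  "relators j =
     {wd [i, i] | i. i \<in> gens j}
   \<union> {(\<lambda>w. wd [i, r] w - wd [r, i] w) | i r. i \<in> gens j \<and> r \<in> gens j \<and> (i + 1 < r \<or> r + 1 < i)}
   \<union> {(\<lambda>w. wd [i, i + 1, i] w - wd [i + 1, i, i + 1] w) | i. i \<in> gens j \<and> i + 1 \<in> gens j}"

text \<open>Two-sided ideal of the free algebra generated by the relators; A_j is the
  quotient ncfree j / ncideal j, so x = y in A_j iff x - y lies in ncideal j.\<close>
definition ncideal :: "nat \<Rightarrow> fa set" where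
  "ncideal j = lspan {fa_mult (fa_mult (wd u) r) (wd v) | u v r.
       set u \<subseteq> gens j \<and> set v \<subseteq> gens j \<and> r \<in> relators j}"

definition symgrp :: "nat \<Rightarrow> (nat \<Rightarrow> nat) set" where
  "symgrp j = {p. p permutes {1..j}}"

definition simple :: "nat \<Rightarrow> nat \<Rightarrow> nat" where
  "simple i = Transposition.transpose i (Suc i)"

definition perm_of_word :: "nat list \<Rightarrow> nat \<Rightarrow> nat" where
  "perm_of_word u = foldr (\<lambda>i p. simple i \<circ> p) u id"

definition len :: "nat \<Rightarrow> (nat \<Rightarrow> nat) \<Rightarrow> nat" where
  "len j w = (LEAST r. \<exists>u. set u \<subseteq> gens j \<and> length u = r \<and> perm_of_word u = w)"

definition reduced_word :: "nat \<Rightarrow> (nat \<Rightarrow> nat) \<Rightarrow> nat list \<Rightarrow> bool" where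
  "reduced_word j w u \<longleftrightarrow> set u \<subseteq> gens j \<and> perm_of_word u = w \<and> length u = len j w"

text \<open>Y_w = Y_{i1} ... Y_{ir} for a (chosen) reduced expression; well defined in A_j.\<close>
definition Yw :: "nat \<Rightarrow> (nat \<Rightarrow> nat) \<Rightarrow> fa" where
  "Yw j w = wd (SOME u. reduced_word j w u)"

definition young :: "nat \<Rightarrow> nat \<Rightarrow> (nat \<Rightarrow> nat) set" where
  "young a b = {p. p permutes {1..a + b} \<and> p ` {1..a} = {1..a}}"

definition dcoset :: "nat \<Rightarrow> nat \<Rightarrow> nat \<Rightarrow> nat \<Rightarrow> (nat \<Rightarrow> nat) \<Rightarrow> (nat \<Rightarrow> nat) set" where
  "dcoset n m k l w = {x \<circ> w \<circ> y | x y. x \<in> young k l \<and> y \<in> young n m}"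

definition minreps :: "nat \<Rightarrow> nat \<Rightarrow> nat \<Rightarrow> nat \<Rightarrow> (nat \<Rightarrow> nat) set" where
  "minreps n m k l = {w \<in> symgrp (n + m).
      \<forall>v \<in> dcoset n m k l w. len (n + m) w \<le> len (n + m) v}"

text \<open>Generators of the image of gamma_{a,b}: Y_i (i<a) from A_a and Y_{a+i} (i<b) from A_b.\<close>
definition gamma_gens :: "nat \<Rightarrow> nat \<Rightarrow> nat set" where
  "gamma_gens a b = gens a \<union> (\<lambda>i. a + i) ` gens b"

text \<open>The sub-(A_k (x) A_l, A_n (x) A_m)-bimodule of A_{n+m} generated by Y_w (lifted to
  the free algebra): spanned by gamma_{k,l}(monomial) * Y_w * gamma_{n,m}(monomial).\<close>
definition genbimod :: "nat \<Rightarrow> nat \<Rightarrow> nat \<Rightarrow> nat \<Rightarrow> (nat \<Rightarrow> nat) \<Rightarrow> fa set" where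
  "genbimod n m k l w = lspan {fa_mult (fa_mult (wd u) (Yw (n + m) w)) (wd v) | u v.
       set u \<subseteq> gamma_gens k l \<and> set v \<subseteq> gamma_gens n m}"

end

(*
  A word that is not reduced lies in the ideal of nilCoxeter relations, and two reduced words of
  the same permutation are congruent modulo it (Matsumoto's theorem, by induction on the length,
  comparing the last letters). Conversely, the sum of the coefficients of the reduced words of a
  fixed permutation z kills every relation. Hence the classes Y_z of reduced words form a basis of
  A_(n+m), and these functionals are its coordinates.

  A permutation is minimal in its double coset iff it has no right descent except at n and no left
  descent except at k. Such a permutation is determined by the number r of elements of {1..n} it
  sends into {1..k}, an invariant of the double coset which ranges over max(0, n - l)..min(n, k).
  Removing descents one at a time writes every z length-additively as u w v with u in S_k x S_l,
  v in S_n x S_m and w minimal, so Y_z lies in the sub-bimodule generated by Y_w: this gives the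
  spanning. The sub-bimodule generated by Y_w only involves the Y_z with z in the double coset of w,
  and distinct minimal representatives have disjoint double cosets: this gives the directness.
*)

theory Submission
  imports Defs
begin

lemma finite_append_splits: "finite {(u, v). u @ v = w}"
proof -
  have "{(u, v). u @ v = w} = (\<lambda>i. (take i w, drop i w)) ` {..length w}"
  proof (rule set_eqI, rule iffI)
    fix p assume "p \<in> {(u, v). u @ v = w}"
    then obtain u v where "p = (u, v)" "u @ v = w" by auto
    then show "p \<in> (\<lambda>i. (take i w, drop i w)) ` {..length w}"
      by (auto intro!: image_eqI[where x = "length u"])
  qed auto
  then show ?thesis by simp
qed

lemma fa_mult_wd_right:
  "fa_mult f (wd b) w = (if \<exists>u. w = u @ b then f (take (length w - length b) w) else 0)"
proof -
  let ?S = "{(u, v). u @ v = w}"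
  let ?p = "(take (length w - length b) w, b)"
  have "fa_mult f (wd b) w = (\<Sum>p\<in>?S. if p = ?p then f (fst p) else 0)"
    unfolding fa_mult_def wd_def by (rule sum.cong) auto
  also have "\<dots> = (if ?p \<in> ?S then f (fst ?p) else 0)"
    by (rule sum.delta[OF finite_append_splits])
  also have "(?p \<in> ?S) = (\<exists>u. w = u @ b)"
    by (auto, metis)
  finally show ?thesis by simp
qed

lemma fa_mult_wd_left:
  "fa_mult (wd a) g w = (if \<exists>v. w = a @ v then g (drop (length a) w) else 0)"
proof -
  let ?S = "{(u, v). u @ v = w}"
  let ?p = "(a, drop (length a) w)"
  have "fa_mult (wd a) g w = (\<Sum>p\<in>?S. if p = ?p then g (snd p) else 0)"
    unfolding fa_mult_def wd_def by (rule sum.cong) auto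
  also have "\<dots> = (if ?p \<in> ?S then g (snd ?p) else 0)"
    by (rule sum.delta[OF finite_append_splits])
  also have "(?p \<in> ?S) = (\<exists>v. w = a @ v)"
    by (auto, metis)
  finally show ?thesis by simp
qed

lemma fa_mult_wd_wd: "fa_mult (wd a) (wd b) = wd (a @ b)"
  by (rule ext, simp only: fa_mult_wd_right) (auto simp: wd_def)

lemma fa_mult_wd_Nil: "fa_mult f (wd []) = f"
  by (rule ext) (simp add: fa_mult_wd_right)

lemma fa_mult_fa_mult_wd: "fa_mult (fa_mult f (wd b)) (wd c) = fa_mult f (wd (b @ c))"
  by (rule ext) (auto simp: fa_mult_wd_right)

lemma fa_mult_wd_diff:
  "fa_mult (wd a) (\<lambda>w. x w - y w) = (\<lambda>w. fa_mult (wd a) x w - fa_mult (wd a) y w)"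
  by (rule ext) (simp add: fa_mult_wd_left)

lemma fa_mult_diff_wd:
  "fa_mult (\<lambda>w. x w - y w) (wd c) = (\<lambda>w. fa_mult x (wd c) w - fa_mult y (wd c) w)"
  by (rule ext) (simp add: fa_mult_wd_right)

lemma lspan_zero: "(\<lambda>w. 0) \<in> lspan B"
  unfolding lspan_def by (auto intro!: exI[of _ "{}"])

lemma lspan_base: "b \<in> B \<Longrightarrow> b \<in> lspan B"
  unfolding lspan_def by (auto intro!: exI[of _ "{b}"] exI[of _ "\<lambda>_. 1"])

lemma lspan_lin:
  assumes "x \<in> lspan B" "y \<in> lspan B"
  shows "(\<lambda>w. a * x w + y w) \<in> lspan B"
proof -
  obtain S c where S: "finite S" "S \<subseteq> B" "x = (\<lambda>w. \<Sum>b\<in>S. c b * b w)"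
    using assms(1) unfolding lspan_def by blast
  obtain T d where T: "finite T" "T \<subseteq> B" "y = (\<lambda>w. \<Sum>b\<in>T. d b * b w)"
    using assms(2) unfolding lspan_def by blast
  let ?c = "\<lambda>b. a * (if b \<in> S then c b else 0) + (if b \<in> T then d b else 0)"
  have extend: "(\<Sum>b\<in>R. e b * b w) = (\<Sum>b\<in>S \<union> T. (if b \<in> R then e b else 0) * b w)"
    if "R \<subseteq> S \<union> T" for R e w
    by (rule sum.mono_neutral_cong_left) (use S T that in auto)
  have "a * x w + y w = (\<Sum>b\<in>S \<union> T. ?c b * b w)" for w
  proof -
    have "x w = (\<Sum>b\<in>S \<union> T. (if b \<in> S then c b else 0) * b w)"
      unfolding S(3) by (rule extend) simp
    moreover have "y w = (\<Sum>b\<in>S \<union> T. (if b \<in> T then d b else 0) * b w)"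
      unfolding T(3) by (rule extend) simp
    ultimately show ?thesis by (simp add: sum_distrib_left sum.distrib distrib_right mult.assoc)
  qed
  then show ?thesis
    unfolding lspan_def using S T by (intro CollectI exI[of _ "S \<union> T"] exI[of _ ?c]) auto
qed

lemma lspan_diff:
  assumes "x \<in> lspan B" "y \<in> lspan B"
  shows "(\<lambda>w. x w - y w) \<in> lspan B"
  using lspan_lin[OF assms(2,1), of "-1"] by simp

lemma lspan_induct [consumes 1, case_names zero base lin]:
  assumes "x \<in> lspan B" "P (\<lambda>w. 0)" "\<And>b. b \<in> B \<Longrightarrow> P b"
    "\<And>x y a. P x \<Longrightarrow> P y \<Longrightarrow> P (\<lambda>w. a * x w + y w)"
  shows "P x"
proof -
  obtain S c where S: "finite S" "S \<subseteq> B" "x = (\<lambda>w. \<Sum>b\<in>S. c b * b w)"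
    using assms(1) unfolding lspan_def by blast
  have "P (\<lambda>w. \<Sum>b\<in>S. c b * b w)"
    using S(1,2) by (induction S rule: finite_induct) (simp_all add: assms(2-4))
  then show ?thesis using S(3) by simp
qed

lemma lspan_sum:
  assumes "finite A" "\<And>a. a \<in> A \<Longrightarrow> g a \<in> lspan B"
  shows "(\<lambda>w. \<Sum>a\<in>A. c a * g a w) \<in> lspan B"
  using assms by (induction A rule: finite_induct) (simp_all add: lspan_zero lspan_lin)

lemma lspan_trans:
  assumes "x \<in> lspan B" "B \<subseteq> lspan C"
  shows "x \<in> lspan C"
  using assms(1) by (induction rule: lspan_induct) (use assms(2) lspan_zero lspan_lin in blast)+

lemma lspan_fa_mult_wd:
  assumes "x \<in> lspan B" "\<And>b. b \<in> B \<Longrightarrow> fa_mult b (wd v) \<in> lspan C"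
  shows "fa_mult x (wd v) \<in> lspan C"
  using assms(1)
proof (induction rule: lspan_induct)
  case zero
  show ?case using lspan_zero[of C] by (simp add: fa_mult_wd_right[abs_def])
next
  case (base b)
  then show ?case by (rule assms(2))
next
  case (lin x y a)
  have "fa_mult (\<lambda>w. a * x w + y w) (wd v) = (\<lambda>w. a * fa_mult x (wd v) w + fa_mult y (wd v) w)"
    by (rule ext) (simp add: fa_mult_wd_right)
  then show ?case using lin lspan_lin by simp
qed

lemma perm_of_word_Nil [simp]: "perm_of_word [] = id"
  by (simp add: perm_of_word_def)

lemma perm_of_word_Cons [simp]: "perm_of_word (i # u) = simple i \<circ> perm_of_word u"
  by (simp add: perm_of_word_def)

lemma perm_of_word_append: "perm_of_word (u @ v) = perm_of_word u \<circ> perm_of_word v"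
  by (induction u) auto

lemma perm_of_word_snoc: "perm_of_word (u @ [i]) = perm_of_word u \<circ> simple i"
  by (simp add: perm_of_word_append)

lemma simple_apply: "simple i x = (if x = i then Suc i else if x = Suc i then i else x)"
  by (simp add: simple_def transpose_def)

lemma simple_apply_self [simp]: "simple i i = Suc i"
  by (simp add: simple_apply)

lemma simple_apply_Suc [simp]: "simple i (Suc i) = i"
  by (simp add: simple_apply)

lemma simple_simple [simp]: "simple i \<circ> simple i = id"
  by (rule ext) (simp add: simple_apply)

lemma comp_simple_simple [simp]: "p \<circ> simple i \<circ> simple i = p"
  by (rule ext) (simp add: simple_apply)

lemma simple_commute: "i + 1 < j \<or> j + 1 < i \<Longrightarrow> simple i \<circ> simple j = simple j \<circ> simple i"
  by (rule ext) (auto simp: simple_apply)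

lemma simple_braid:
  "simple i \<circ> simple (i + 1) \<circ> simple i = simple (i + 1) \<circ> simple i \<circ> simple (i + 1)"
  by (rule ext) (auto simp: simple_apply)

lemma simple_permutes: "i \<in> gens N \<Longrightarrow> simple i permutes {1..N}"
  unfolding simple_def by (rule permutes_swap_id) (auto simp: gens_def)

lemma simple_symgrp: "i \<in> gens N \<Longrightarrow> simple i \<in> symgrp N"
  unfolding symgrp_def mem_Collect_eq by (rule simple_permutes)

lemma symgrp_comp: "p \<in> symgrp N \<Longrightarrow> q \<in> symgrp N \<Longrightarrow> p \<circ> q \<in> symgrp N"
  by (simp add: symgrp_def permutes_compose)

lemma symgrp_inv: "p \<in> symgrp N \<Longrightarrow> inv p \<in> symgrp N"
  by (simp add: symgrp_def permutes_inv)

lemma perm_of_word_symgrp: "set u \<subseteq> gens N \<Longrightarrow> perm_of_word u \<in> symgrp N"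
proof (induction u)
  case Nil
  show ?case by (simp add: symgrp_def permutes_def)
next
  case (Cons i u)
  then show ?case
    unfolding perm_of_word_Cons by (intro symgrp_comp simple_symgrp) simp_all
qed

lemma finite_symgrp: "finite (symgrp N)"
  unfolding symgrp_def by (rule finite_permutations) simp

lemma symgrp_apply_neq: "p \<in> symgrp N \<Longrightarrow> a \<noteq> b \<Longrightarrow> p a \<noteq> p b"
  using permutes_inj[of p "{1..N}"] by (auto simp: symgrp_def inj_eq)

lemma strict_mono_on_atLeastAtMost_Suc:
  fixes f :: "nat \<Rightarrow> 'a::order"
  assumes "\<And>i. a \<le> i \<Longrightarrow> i < b \<Longrightarrow> f i < f (Suc i)"
  shows "strict_mono_on {a..b} f"
proof (rule strict_mono_onI)
  fix x y assume "x \<in> {a..b}" "y \<in> {a..b}" "x < y"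
  then show "f x < f y"
  proof (induction y)
    case (Suc y)
    then show ?case
      using assms[of y] by (cases "x = y") (auto intro: order.strict_trans)
  qed simp
qed

lemma strict_mono_on_image_eq:
  fixes f g :: "nat \<Rightarrow> 'a::linorder"
  assumes f: "strict_mono_on {a..b} f" and g: "strict_mono_on {a..b} g"
    and image: "f ` {a..b} = g ` {a..b}" and x: "x \<in> {a..b}"
  shows "f x = g x"
proof -
  have "sorted_wrt (<) (map h [a..<Suc b])" if "strict_mono_on {a..b} h" for h :: "nat \<Rightarrow> 'a"
    unfolding sorted_wrt_map
    by (rule sorted_wrt_mono_rel[OF _ sorted_wrt_upt]) (use that in \<open>auto simp: strict_mono_on_def\<close>)
  then have "sorted (map h [a..<Suc b]) \<and> distinct (map h [a..<Suc b])"
    if "strict_mono_on {a..b} h" for h :: "nat \<Rightarrow> 'a"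
    using that by (simp only: strict_sorted_iff)
  moreover have "set (map f [a..<Suc b]) = set (map g [a..<Suc b])"
    using image by (simp only: set_map set_upt atLeastLessThanSuc_atLeastAtMost)
  ultimately have "map f [a..<Suc b] = map g [a..<Suc b]"
    using f g sorted_distinct_set_unique by blast
  then have "\<forall>y\<in>set [a..<Suc b]. f y = g y" by (simp only: map_eq_conv)
  moreover have "x \<in> set [a..<Suc b]" using x by auto
  ultimately show ?thesis by blast
qed

definition inversions :: "nat \<Rightarrow> (nat \<Rightarrow> nat) \<Rightarrow> (nat \<times> nat) set" where
  "inversions N p = {(a, b). a \<in> {1..N} \<and> b \<in> {1..N} \<and> a < b \<and> p b < p a}"

definition n_inversions :: "nat \<Rightarrow> (nat \<Rightarrow> nat) \<Rightarrow> nat" where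
  "n_inversions N p = card (inversions N p)"

lemma finite_inversions: "finite (inversions N p)"
  by (rule finite_subset[of _ "{1..N} \<times> {1..N}"]) (auto simp: inversions_def)

lemma n_inversions_id [simp]: "n_inversions N id = 0"
proof -
  have "inversions N id = {}" by (auto simp: inversions_def)
  then show ?thesis by (simp add: n_inversions_def)
qed

lemma inversions_simple_comp_iff:
  assumes p: "p \<in> symgrp N"
    and ab: "(a, b) \<notin> {(inv p j, inv p (Suc j)), (inv p (Suc j), inv p j)}"
  shows "(a, b) \<in> inversions N (simple j \<circ> p) \<longleftrightarrow> (a, b) \<in> inversions N p"
proof (cases "a < b")
  case True
  have pp: "p permutes {1..N}" using p by (simp add: symgrp_def)
  have "p a \<notin> {j, Suc j} \<or> p b \<notin> {j, Suc j}"
  proof (rule ccontr)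
    assume "\<not> ?thesis"
    then have "inv p (p a) \<in> {inv p j, inv p (Suc j)}" "inv p (p b) \<in> {inv p j, inv p (Suc j)}"
      by auto
    then show False using ab True permutes_inverses(2)[OF pp] by auto
  qed
  moreover have "p b \<noteq> p a" using True symgrp_apply_neq[OF p] by auto
  ultimately have "simple j (p b) < simple j (p a) \<longleftrightarrow> p b < p a"
    by (auto simp: simple_apply)
  then show ?thesis by (auto simp: inversions_def)
qed (auto simp: inversions_def)

lemma n_inversions_simple_comp:
  assumes p: "p \<in> symgrp N" and j: "j \<in> gens N"
  shows "inv p j < inv p (Suc j) \<Longrightarrow> n_inversions N (simple j \<circ> p) = Suc (n_inversions N p)"
    and "inv p (Suc j) < inv p j \<Longrightarrow> Suc (n_inversions N (simple j \<circ> p)) = n_inversions N p"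
proof -
  have pp: "p permutes {1..N}" using p by (simp add: symgrp_def)
  define a b where "a = inv p j" and "b = inv p (Suc j)"
  have ab: "a \<in> {1..N}" "b \<in> {1..N}" "p a = j" "p b = Suc j"
    unfolding a_def b_def using j permutes_in_image[OF permutes_inv[OF pp]]
    by (auto simp: gens_def permutes_inverses[OF pp])
  have other: "x \<in> inversions N (simple j \<circ> p) \<longleftrightarrow> x \<in> inversions N p"
    if "x \<notin> {(a, b), (b, a)}" for x
    using inversions_simple_comp_iff[OF p, of "fst x" "snd x" j] that
    unfolding a_def b_def by simp
  have swapped: "(a, b) \<in> inversions N (simple j \<circ> p) \<longleftrightarrow> a < b"
    "(b, a) \<notin> inversions N (simple j \<circ> p)"
    "(a, b) \<notin> inversions N p" "(b, a) \<in> inversions N p \<longleftrightarrow> b < a"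
    using ab by (auto simp: inversions_def simple_apply)
  show "n_inversions N (simple j \<circ> p) = Suc (n_inversions N p)" if "inv p j < inv p (Suc j)"
  proof -
    have "a < b" using that unfolding a_def b_def .
    have "inversions N (simple j \<circ> p) = insert (a, b) (inversions N p)"
    proof (rule set_eqI)
      fix x show "x \<in> inversions N (simple j \<circ> p) \<longleftrightarrow> x \<in> insert (a, b) (inversions N p)"
        using other[of x] swapped \<open>a < b\<close> by (cases "x \<in> {(a, b), (b, a)}") auto
    qed
    then show ?thesis unfolding n_inversions_def using swapped finite_inversions by simp
  qed
  show "Suc (n_inversions N (simple j \<circ> p)) = n_inversions N p" if "inv p (Suc j) < inv p j"
  proof -
    have "b < a" using that unfolding a_def b_def .
    have "inversions N p = insert (b, a) (inversions N (simple j \<circ> p))"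
    proof (rule set_eqI)
      fix x show "x \<in> inversions N p \<longleftrightarrow> x \<in> insert (b, a) (inversions N (simple j \<circ> p))"
        using other[of x] swapped \<open>b < a\<close> by (cases "x \<in> {(a, b), (b, a)}") auto
    qed
    then show ?thesis unfolding n_inversions_def using swapped finite_inversions by simp
  qed
qed

lemma n_inversions_inv_le:
  assumes "p \<in> symgrp N"
  shows "n_inversions N (inv p) \<le> n_inversions N p"
proof -
  have pp: "p permutes {1..N}" using assms by (simp add: symgrp_def)
  have "inversions N (inv p) \<subseteq> (\<lambda>(a, b). (p b, p a)) ` inversions N p"
  proof
    fix x assume "x \<in> inversions N (inv p)"
    then obtain c d where x: "x = (c, d)" "c \<in> {1..N}" "d \<in> {1..N}" "c < d" "inv p d < inv p c"
      by (auto simp: inversions_def)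
    moreover have "inv p d \<in> {1..N}" "inv p c \<in> {1..N}"
      using x(2,3) permutes_in_image[OF permutes_inv[OF pp]] by blast+
    ultimately have "(inv p d, inv p c) \<in> inversions N p"
      using permutes_inverses[OF pp] by (auto simp: inversions_def)
    moreover have "x = (\<lambda>(a, b). (p b, p a)) (inv p d, inv p c)"
      using x permutes_inverses[OF pp] by auto
    ultimately show "x \<in> (\<lambda>(a, b). (p b, p a)) ` inversions N p" by blast
  qed
  then show ?thesis
    unfolding n_inversions_def
    by (meson card_image_le card_mono finite_imageI finite_inversions order_trans)
qed

lemma n_inversions_inv:
  assumes "p \<in> symgrp N"
  shows "n_inversions N (inv p) = n_inversions N p"
proof -
  have pp: "p permutes {1..N}" using assms by (simp add: symgrp_def)
  have "n_inversions N (inv (inv p)) \<le> n_inversions N (inv p)"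
    by (rule n_inversions_inv_le[OF symgrp_inv[OF assms]])
  then show ?thesis using n_inversions_inv_le[OF assms] inv_inv_eq[OF permutes_bij[OF pp]] by simp
qed

lemma n_inversions_comp_simple:
  assumes p: "p \<in> symgrp N" and i: "i \<in> gens N"
  shows "p i < p (Suc i) \<Longrightarrow> n_inversions N (p \<circ> simple i) = Suc (n_inversions N p)"
    and "p (Suc i) < p i \<Longrightarrow> Suc (n_inversions N (p \<circ> simple i)) = n_inversions N p"
proof -
  have pp: "p permutes {1..N}" using p by (simp add: symgrp_def)
  have ip: "inv p \<in> symgrp N" using symgrp_inv[OF p] .
  have "inv (p \<circ> simple i) = simple i \<circ> inv p"
    using o_inv_distrib[OF permutes_bij[OF pp], of "simple i"] by (simp add: simple_def)
  then have "n_inversions N (p \<circ> simple i) = n_inversions N (simple i \<circ> inv p)"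
    using n_inversions_inv[OF symgrp_comp[OF p simple_symgrp[OF i]]] by simp
  moreover note n_inversions_inv[OF p] inv_inv_eq[OF permutes_bij[OF pp]]
  ultimately show "p i < p (Suc i) \<Longrightarrow> n_inversions N (p \<circ> simple i) = Suc (n_inversions N p)"
    and "p (Suc i) < p i \<Longrightarrow> Suc (n_inversions N (p \<circ> simple i)) = n_inversions N p"
    using n_inversions_simple_comp[OF ip i] by simp_all
qed

lemma n_inversions_perm_of_word_le:
  "set u \<subseteq> gens N \<Longrightarrow> n_inversions N (perm_of_word u) \<le> length u"
proof (induction u rule: rev_induct)
  case (snoc i u)
  have p: "perm_of_word u \<in> symgrp N" and i: "i \<in> gens N"
    using snoc.prems by (auto intro: perm_of_word_symgrp)
  have "perm_of_word u i < perm_of_word u (Suc i) \<or> perm_of_word u (Suc i) < perm_of_word u i"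
    using symgrp_apply_neq[OF p, of i "Suc i"] by linarith
  then have "n_inversions N (perm_of_word u \<circ> simple i) \<le> Suc (n_inversions N (perm_of_word u))"
    using n_inversions_comp_simple[OF p i] by (elim disjE) simp_all
  moreover have "n_inversions N (perm_of_word u) \<le> length u" using snoc by simp
  ultimately show ?case by (simp only: perm_of_word_snoc length_append_singleton)
qed simp

lemma symgrp_ascending_eq_id:
  assumes p: "p \<in> symgrp N" and asc: "\<And>i. i \<in> gens N \<Longrightarrow> p i < p (Suc i)"
  shows "p = id"
proof
  fix x
  have pp: "p permutes {1..N}" using p by (simp add: symgrp_def)
  show "p x = id x"
  proof (cases "x \<in> {1..N}")
    case True
    have "strict_mono_on {1..N} p"
      by (rule strict_mono_on_atLeastAtMost_Suc) (use asc in \<open>auto simp: gens_def\<close>)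
    moreover have "p ` {1..N} = id ` {1..N}" using permutes_image[OF pp] by simp
    ultimately show ?thesis using strict_mono_on_image_eq[OF _ strict_mono_on_id _ True] by blast
  next
    case False
    then show ?thesis using permutes_not_in[OF pp] by simp
  qed
qed

lemma symgrp_word_n_inversions:
  "p \<in> symgrp N \<Longrightarrow> \<exists>u. set u \<subseteq> gens N \<and> perm_of_word u = p \<and> length u = n_inversions N p"
proof (induction "n_inversions N p" arbitrary: p rule: less_induct)
  case less
  show ?case
  proof (cases "\<exists>i \<in> gens N. p (Suc i) < p i")
    case False
    then have "p = id"
      using symgrp_ascending_eq_id[OF less.prems] symgrp_apply_neq[OF less.prems]
      by (metis n_not_Suc_n nat_neq_iff)
    then show ?thesis by (auto intro: exI[of _ "[]"])
  next
    case True
    then obtain i where i: "i \<in> gens N" "p (Suc i) < p i" by blast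
    note shorter = n_inversions_comp_simple(2)[OF less.prems i]
    obtain u where u: "set u \<subseteq> gens N" "perm_of_word u = p \<circ> simple i"
      "length u = n_inversions N (p \<circ> simple i)"
      using less.hyps[OF _ symgrp_comp[OF less.prems simple_symgrp[OF i(1)]]] shorter by auto
    then show ?thesis
      using i shorter by (intro exI[of _ "u @ [i]"]) (simp add: perm_of_word_snoc)
  qed
qed

lemma len_eq_n_inversions:
  assumes "p \<in> symgrp N"
  shows "len N p = n_inversions N p"
  unfolding len_def
proof (rule Least_equality)
  show "\<exists>u. set u \<subseteq> gens N \<and> length u = n_inversions N p \<and> perm_of_word u = p"
    using symgrp_word_n_inversions[OF assms] by auto
qed (use n_inversions_perm_of_word_le in blast)

lemma reduced_word_iff:
  "reduced_word N w u \<longleftrightarrow> set u \<subseteq> gens N \<and> perm_of_word u = w \<and> length u = n_inversions N w"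
  using len_eq_n_inversions[OF perm_of_word_symgrp] by (auto simp: reduced_word_def)

lemma reduced_word_symgrp: "reduced_word N w u \<Longrightarrow> w \<in> symgrp N"
  by (auto simp: reduced_word_iff intro: perm_of_word_symgrp)

lemma reduced_word_exists: "w \<in> symgrp N \<Longrightarrow> \<exists>u. reduced_word N w u"
  using symgrp_word_n_inversions by (auto simp: reduced_word_iff)

lemma reduced_word_length_le:
  "reduced_word N w u \<Longrightarrow> set v \<subseteq> gens N \<Longrightarrow> perm_of_word v = w \<Longrightarrow> length u \<le> length v"
  using n_inversions_perm_of_word_le by (auto simp: reduced_word_iff)

lemma reduced_word_snoc_iff:
  "reduced_word N w (u @ [i]) \<longleftrightarrow> i \<in> gens N \<and> w (Suc i) < w i \<and> reduced_word N (w \<circ> simple i) u"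
proof
  assume red: "reduced_word N w (u @ [i])"
  then have u: "set u \<subseteq> gens N" "perm_of_word u = w \<circ> simple i"
    and i: "i \<in> gens N" and len: "Suc (length u) = n_inversions N w"
    by (auto simp: reduced_word_iff perm_of_word_snoc comp_assoc)
  have w: "w \<in> symgrp N" using red by (rule reduced_word_symgrp)
  have "n_inversions N (w \<circ> simple i) \<le> length u"
    using n_inversions_perm_of_word_le[OF u(1)] u(2) by simp
  then have "\<not> w i < w (Suc i)" using n_inversions_comp_simple(1)[OF w i] len by auto
  then have desc: "w (Suc i) < w i" using symgrp_apply_neq[OF w, of i "Suc i"] by linarith
  then show "i \<in> gens N \<and> w (Suc i) < w i \<and> reduced_word N (w \<circ> simple i) u"
    using u i len n_inversions_comp_simple(2)[OF w i] by (simp add: reduced_word_iff)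
next
  assume "i \<in> gens N \<and> w (Suc i) < w i \<and> reduced_word N (w \<circ> simple i) u"
  then have i: "i \<in> gens N" "w (Suc i) < w i" and u: "reduced_word N (w \<circ> simple i) u" by auto
  have "w \<circ> simple i \<circ> simple i \<in> symgrp N"
    using symgrp_comp[OF reduced_word_symgrp[OF u] simple_symgrp[OF i(1)]] .
  then have w: "w \<in> symgrp N" by simp
  show "reduced_word N w (u @ [i])"
    using u i n_inversions_comp_simple(2)[OF w i(1,2)]
    by (auto simp: reduced_word_iff perm_of_word_snoc)
qed

lemma descent_reduced_word_exists:
  assumes "w \<in> symgrp N" "i \<in> gens N" "w (Suc i) < w i"
  shows "\<exists>z. reduced_word N w (z @ [i])"
  using reduced_word_exists[OF symgrp_comp[OF assms(1) simple_symgrp[OF assms(2)]]] assms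
  by (auto simp: reduced_word_snoc_iff)

lemma Yw_reduced_word: "w \<in> symgrp N \<Longrightarrow> \<exists>y. Yw N w = wd y \<and> reduced_word N w y"
  unfolding Yw_def by (metis reduced_word_exists someI_ex)

definition nc_cong :: "nat \<Rightarrow> fa \<Rightarrow> fa \<Rightarrow> bool" where
  "nc_cong N x y \<longleftrightarrow> (\<lambda>w. x w - y w) \<in> ncideal N"

lemma nc_cong_refl: "nc_cong N x x"
  using lspan_zero by (simp add: nc_cong_def ncideal_def)

lemma nc_cong_sym: "nc_cong N x y \<Longrightarrow> nc_cong N y x"
  using lspan_diff[OF lspan_zero] by (fastforce simp: nc_cong_def ncideal_def)

lemma nc_cong_trans: "nc_cong N x y \<Longrightarrow> nc_cong N y z \<Longrightarrow> nc_cong N x z"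
  using lspan_lin[of _ _ _ 1] by (fastforce simp: nc_cong_def ncideal_def)

lemma ncideal_cong: "nc_cong N x y \<Longrightarrow> y \<in> ncideal N \<Longrightarrow> x \<in> ncideal N"
  using lspan_lin[of _ _ _ 1] by (fastforce simp: nc_cong_def ncideal_def)

lemma ncideal_generator:
  "set a \<subseteq> gens N \<Longrightarrow> set b \<subseteq> gens N \<Longrightarrow> r \<in> relators N \<Longrightarrow>
    fa_mult (fa_mult (wd a) r) (wd b) \<in> ncideal N"
  unfolding ncideal_def by (rule lspan_base) blast

lemma ncideal_fa_mult_wd:
  assumes "x \<in> ncideal N" "set c \<subseteq> gens N"
  shows "fa_mult x (wd c) \<in> ncideal N"
  using assms(1) unfolding ncideal_def
proof (rule lspan_fa_mult_wd)
  fix b assume "b \<in> {fa_mult (fa_mult (wd u) r) (wd v) |u v r.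
      set u \<subseteq> gens N \<and> set v \<subseteq> gens N \<and> r \<in> relators N}"
  then obtain u v r where "b = fa_mult (fa_mult (wd u) r) (wd v)"
    "set u \<subseteq> gens N" "set v \<subseteq> gens N" "r \<in> relators N" by blast
  then show "fa_mult b (wd c) \<in> lspan {fa_mult (fa_mult (wd u) r) (wd v) |u v r.
      set u \<subseteq> gens N \<and> set v \<subseteq> gens N \<and> r \<in> relators N}"
    using assms(2) ncideal_generator[of u N "v @ c" r]
    by (simp add: fa_mult_fa_mult_wd ncideal_def)
qed

lemma nc_cong_append:
  assumes "nc_cong N (wd u) (wd v)" "set c \<subseteq> gens N"
  shows "nc_cong N (wd (u @ c)) (wd (v @ c))"
  using ncideal_fa_mult_wd[OF assms[unfolded nc_cong_def]]
  by (simp add: fa_mult_diff_wd fa_mult_wd_wd nc_cong_def)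

lemma ncideal_append: "wd u \<in> ncideal N \<Longrightarrow> set c \<subseteq> gens N \<Longrightarrow> wd (u @ c) \<in> ncideal N"
  using ncideal_fa_mult_wd by (fastforce simp: fa_mult_wd_wd)

lemma wd_square_ncideal:
  assumes "set a \<subseteq> gens N" "i \<in> gens N"
  shows "wd (a @ [i, i]) \<in> ncideal N"
proof -
  have "wd [i, i] \<in> relators N" using assms(2) by (auto simp: relators_def)
  from ncideal_generator[OF assms(1) _ this, of "[]"] show ?thesis
    by (simp add: fa_mult_wd_Nil fa_mult_wd_wd)
qed

lemma nc_cong_commute:
  assumes "set a \<subseteq> gens N" "i \<in> gens N" "j \<in> gens N" "i + 1 < j \<or> j + 1 < i"
  shows "nc_cong N (wd (a @ [i, j])) (wd (a @ [j, i]))"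
proof -
  have "(\<lambda>w. wd [i, j] w - wd [j, i] w) \<in> relators N"
    using assms(2-4) unfolding relators_def by blast
  from ncideal_generator[OF assms(1) _ this, of "[]"] show ?thesis
    by (simp add: fa_mult_wd_Nil fa_mult_wd_wd fa_mult_wd_diff nc_cong_def)
qed

lemma nc_cong_braid:
  assumes "set a \<subseteq> gens N" "i \<in> gens N" "Suc i \<in> gens N"
  shows "nc_cong N (wd (a @ [i, Suc i, i])) (wd (a @ [Suc i, i, Suc i]))"
proof -
  have "(\<lambda>w. wd [i, i + 1, i] w - wd [i + 1, i, i + 1] w) \<in> relators N"
    using assms(2,3) unfolding relators_def by auto
  from ncideal_generator[OF assms(1) _ this, of "[]"] show ?thesis
    by (simp add: fa_mult_wd_Nil fa_mult_wd_wd fa_mult_wd_diff nc_cong_def)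
qed

subsection \<open>Matsumoto's theorem for the nilCoxeter relations\<close>

lemma reduced_words_cong_commute_step:
  assumes IH: "\<And>w' u' v'. length u' \<le> length u \<Longrightarrow> reduced_word N w' u' \<Longrightarrow> reduced_word N w' v' \<Longrightarrow>
      nc_cong N (wd u') (wd v')"
    and u: "reduced_word N w (u @ [i])" and v: "reduced_word N w (v @ [j])"
    and far: "i + 1 < j \<or> j + 1 < i"
  shows "nc_cong N (wd (u @ [i])) (wd (v @ [j]))"
proof -
  \<comment> \<open>Both words are congruent to a reduced word z of w s_i s_j followed by [j, i] resp. [i, j].\<close>
  have w: "w \<in> symgrp N" using u by (rule reduced_word_symgrp)
  from u have i: "i \<in> gens N" "w (Suc i) < w i" and u': "reduced_word N (w \<circ> simple i) u"
    by (simp_all add: reduced_word_snoc_iff)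
  from v have j: "j \<in> gens N" "w (Suc j) < w j" and v': "reduced_word N (w \<circ> simple j) v"
    by (simp_all add: reduced_word_snoc_iff)
  have "(w \<circ> simple i) (Suc j) < (w \<circ> simple i) j" using j far by (auto simp: simple_apply)
  then obtain z where z: "reduced_word N (w \<circ> simple i) (z @ [j])"
    using descent_reduced_word_exists[OF symgrp_comp[OF w simple_symgrp[OF i(1)]] j(1)] by blast
  have "w \<circ> simple i \<circ> simple j = w \<circ> simple j \<circ> simple i"
    using simple_commute[OF far] by (simp add: comp_assoc)
  moreover have "(w \<circ> simple j) (Suc i) < (w \<circ> simple j) i" using i far by (auto simp: simple_apply)
  ultimately have z': "reduced_word N (w \<circ> simple j) (z @ [i])"
    using z i by (simp add: reduced_word_snoc_iff)
  have "length v = length u"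
    using u v by (simp add: reduced_word_iff)
  then have cu: "nc_cong N (wd u) (wd (z @ [j]))" and cv: "nc_cong N (wd v) (wd (z @ [i]))"
    using IH[OF _ u' z] IH[OF _ v' z'] by simp_all
  have sz: "set z \<subseteq> gens N" using z by (simp add: reduced_word_iff)
  have "nc_cong N (wd (u @ [i])) (wd (z @ [j, i]))"
    using nc_cong_append[OF cu, of "[i]"] i by simp
  moreover have "nc_cong N (wd (z @ [j, i])) (wd (z @ [i, j]))"
    using nc_cong_commute[OF sz j(1) i(1)] far by auto
  moreover have "nc_cong N (wd (z @ [i, j])) (wd (v @ [j]))"
    using nc_cong_sym[OF nc_cong_append[OF cv, of "[j]"]] j by simp
  ultimately show ?thesis by (blast intro: nc_cong_trans)
qed

lemma reduced_words_cong_braid_step: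
  assumes IH: "\<And>w' u' v'. length u' \<le> length u \<Longrightarrow> reduced_word N w' u' \<Longrightarrow> reduced_word N w' v' \<Longrightarrow>
      nc_cong N (wd u') (wd v')"
    and u: "reduced_word N w (u @ [i])" and v: "reduced_word N w (v @ [Suc i])"
  shows "nc_cong N (wd (u @ [i])) (wd (v @ [Suc i]))"
proof -
  \<comment> \<open>Both words are congruent to a reduced word z of w s_i s_(i+1) s_i followed by the two
    sides of the braid relation.\<close>
  let ?s = simple and ?i' = "Suc i"
  have w: "w \<in> symgrp N" using u by (rule reduced_word_symgrp)
  from u have i: "i \<in> gens N" "w ?i' < w i" and u': "reduced_word N (w \<circ> ?s i) u"
    by (simp_all add: reduced_word_snoc_iff)
  from v have i': "?i' \<in> gens N" "w (Suc ?i') < w ?i'" and v': "reduced_word N (w \<circ> ?s ?i') v"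
    by (simp_all add: reduced_word_snoc_iff)
  have "(w \<circ> ?s i \<circ> ?s ?i') ?i' < (w \<circ> ?s i \<circ> ?s ?i') i" using i' by (simp add: simple_apply)
  then obtain z where z: "reduced_word N (w \<circ> ?s i \<circ> ?s ?i') (z @ [i])"
    using descent_reduced_word_exists[OF symgrp_comp[OF symgrp_comp[OF w] simple_symgrp] i(1)]
      i(1) i'(1) simple_symgrp by blast
  have "w \<circ> ?s i \<circ> ?s ?i' \<circ> ?s i = w \<circ> ?s ?i' \<circ> ?s i \<circ> ?s ?i'"
    using simple_braid[of i] by (simp add: comp_assoc)
  then have z0: "reduced_word N (w \<circ> ?s ?i' \<circ> ?s i \<circ> ?s ?i') z"
    using z by (simp add: reduced_word_snoc_iff)
  have zi: "reduced_word N (w \<circ> ?s i) ((z @ [i]) @ [?i'])"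
    using z i i' by (subst reduced_word_snoc_iff) (auto simp: simple_apply)
  have zi': "reduced_word N (w \<circ> ?s ?i') ((z @ [?i']) @ [i])"
    using z0 i i' by (subst reduced_word_snoc_iff)+ (auto simp: simple_apply)
  have "length v = length u"
    using u v by (simp add: reduced_word_iff)
  then have cu: "nc_cong N (wd u) (wd (z @ [i, ?i']))" and cv: "nc_cong N (wd v) (wd (z @ [?i', i]))"
    using IH[OF _ u' zi] IH[OF _ v' zi'] by simp_all
  have sz: "set z \<subseteq> gens N" using z by (simp add: reduced_word_iff)
  have "nc_cong N (wd (u @ [i])) (wd (z @ [i, ?i', i]))"
    using nc_cong_append[OF cu, of "[i]"] i by simp
  moreover have "nc_cong N (wd (z @ [i, ?i', i])) (wd (z @ [?i', i, ?i']))"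
    using nc_cong_braid[OF sz i(1) i'(1)] .
  moreover have "nc_cong N (wd (z @ [?i', i, ?i'])) (wd (v @ [?i']))"
    using nc_cong_sym[OF nc_cong_append[OF cv, of "[?i']"]] i' by simp
  ultimately show ?thesis by (blast intro: nc_cong_trans)
qed

theorem reduced_words_cong:
  "reduced_word N w u \<Longrightarrow> reduced_word N w v \<Longrightarrow> nc_cong N (wd u) (wd v)"
proof (induction "length u" arbitrary: w u v rule: less_induct)
  case less
  have len: "length u = length v" using less.prems by (simp add: reduced_word_iff)
  show ?case
  proof (cases u rule: rev_cases)
    case Nil
    then show ?thesis using len nc_cong_refl by simp
  next
    case (snoc u' i)
    then obtain v' j where v_eq: "v = v' @ [j]" using len by (metis length_0_conv rev_exhaust)
    have IH: "nc_cong N (wd u'') (wd v'')"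
      if "length u'' \<le> length u'" "reduced_word N w' u''" "reduced_word N w' v''" for w' u'' v''
      using less.hyps[OF _ that(2,3)] that(1) snoc by simp
    have u: "reduced_word N w (u' @ [i])" and v: "reduced_word N w (v' @ [j])"
      using less.prems snoc v_eq by simp_all
    consider "i = j" | "j = Suc i" | "i = Suc j" | "i + 1 < j \<or> j + 1 < i" by linarith
    then show ?thesis
    proof cases
      case 1
      from u v have "reduced_word N (w \<circ> simple i) u'" "reduced_word N (w \<circ> simple i) v'"
        "i \<in> gens N"
        unfolding 1 by (simp_all add: reduced_word_snoc_iff)
      then show ?thesis using IH nc_cong_append[of N u' v' "[i]"] snoc v_eq 1 by simp
    next
      case 2
      then show ?thesis using reduced_words_cong_braid_step[OF IH u] v v_eq snoc by simp
    next
      case 3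
      have "length v' = length u'" using len snoc v_eq by simp
      then show ?thesis
        using nc_cong_sym[OF reduced_words_cong_braid_step[OF _ v]] IH u snoc v_eq 3 by simp
    next
      case 4
      then show ?thesis using reduced_words_cong_commute_step[OF IH u v] snoc v_eq by simp
    qed
  qed
qed

theorem nonreduced_word_ncideal:
  "set u \<subseteq> gens N \<Longrightarrow> \<not> reduced_word N (perm_of_word u) u \<Longrightarrow> wd u \<in> ncideal N"
proof (induction u rule: rev_induct)
  case Nil
  have "reduced_word N (perm_of_word []) []" unfolding reduced_word_iff by simp
  then show ?case using Nil by blast
next
  case (snoc i u)
  let ?w = "perm_of_word u"
  have u: "set u \<subseteq> gens N" and i: "i \<in> gens N" using snoc.prems by auto
  show ?case
  proof (cases "reduced_word N ?w u")
    case False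
    then show ?thesis using snoc.IH[OF u] ncideal_append[of u N "[i]"] i by simp
  next
    case True
    have w: "?w \<in> symgrp N" using u by (rule perm_of_word_symgrp)
    have "\<not> reduced_word N (?w \<circ> simple i) (u @ [i])"
      using snoc.prems(2) unfolding perm_of_word_snoc .
    moreover have "reduced_word N (?w \<circ> simple i \<circ> simple i) u" using True by simp
    ultimately have "\<not> (?w \<circ> simple i) (Suc i) < (?w \<circ> simple i) i"
      using i reduced_word_snoc_iff by blast
    then have "\<not> ?w i < ?w (Suc i)" by simp
    then have "?w (Suc i) < ?w i" using symgrp_apply_neq[OF w, of i "Suc i"] by linarith
    then obtain z where z: "reduced_word N ?w (z @ [i])"
      using descent_reduced_word_exists[OF w i] by blast
    have "nc_cong N (wd (u @ [i])) (wd (z @ [i, i]))"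
      using nc_cong_append[OF reduced_words_cong[OF True z], of "[i]"] i by simp
    moreover have "wd (z @ [i, i]) \<in> ncideal N"
      using wd_square_ncideal[of z N i] z i by (simp add: reduced_word_iff)
    ultimately show ?thesis by (rule ncideal_cong)
  qed
qed

lemma reduced_word_cong_Yw: "reduced_word N w u \<Longrightarrow> nc_cong N (wd u) (Yw N w)"
  using Yw_reduced_word[OF reduced_word_symgrp] reduced_words_cong by metis

subsection \<open>The basis \<open>Y\<^sub>w\<close> of the nilCoxeter algebra\<close>

definition ycoord :: "nat \<Rightarrow> (nat \<Rightarrow> nat) \<Rightarrow> fa \<Rightarrow> rat" where
  "ycoord N w x = (\<Sum>u | reduced_word N w u. x u)"

lemma finite_reduced_words: "finite {u. reduced_word N w u}"
proof (rule finite_subset)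
  show "{u. reduced_word N w u} \<subseteq> {u. set u \<subseteq> gens N \<and> length u = len N w}"
    by (auto simp: reduced_word_def)
  show "finite {u. set u \<subseteq> gens N \<and> length u = len N w}"
    by (rule finite_lists_length_eq) (simp add: gens_def)
qed

lemma ycoord_lin: "ycoord N w (\<lambda>v. a * x v + y v) = a * ycoord N w x + ycoord N w y"
  unfolding ycoord_def by (simp add: sum.distrib sum_distrib_left)

lemma ycoord_scale: "ycoord N w (\<lambda>v. a * x v) = a * ycoord N w x"
  unfolding ycoord_def by (simp add: sum_distrib_left)

lemma ycoord_diff: "ycoord N w (\<lambda>v. x v - y v) = ycoord N w x - ycoord N w y"
  unfolding ycoord_def by (simp add: sum_subtractf)

lemma ycoord_sum: "ycoord N w (\<lambda>v. \<Sum>a\<in>A. f a v) = (\<Sum>a\<in>A. ycoord N w (f a))"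
  unfolding ycoord_def by (rule sum.swap)

lemma ycoord_wd: "ycoord N w (wd u) = (if reduced_word N w u then 1 else 0)"
  unfolding ycoord_def wd_def using finite_reduced_words by simp

lemma ycoord_wd_reduced: "reduced_word N w u \<Longrightarrow> ycoord N w' (wd u) = (if w' = w then 1 else 0)"
  by (auto simp: ycoord_wd reduced_word_def)

lemma ycoord_relator:
  assumes "set a \<subseteq> gens N" "set c \<subseteq> gens N" "r \<in> relators N"
  shows "ycoord N w (fa_mult (fa_mult (wd a) r) (wd c)) = 0"
proof -
  have same_reduced: "reduced_word N w (a @ p @ c) \<longleftrightarrow> reduced_word N w (a @ q @ c)"
    if "set p \<subseteq> gens N" "set q \<subseteq> gens N" "perm_of_word p = perm_of_word q" "length p = length q"
    for p q
    using that assms(1,2) by (auto simp: reduced_word_def perm_of_word_append)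
  have relator_diff: "fa_mult (fa_mult (wd a) (\<lambda>v. wd p v - wd q v)) (wd c)
      = (\<lambda>v. wd (a @ p @ c) v - wd (a @ q @ c) v)" for p q
    by (simp add: fa_mult_wd_diff fa_mult_diff_wd fa_mult_wd_wd)
  consider (square) i where "r = wd [i, i]" "i \<in> gens N"
    | (commute) i j where "r = (\<lambda>v. wd [i, j] v - wd [j, i] v)" "i \<in> gens N" "j \<in> gens N"
        "i + 1 < j \<or> j + 1 < i"
    | (braid) i where "r = (\<lambda>v. wd [i, i + 1, i] v - wd [i + 1, i, i + 1] v)" "i \<in> gens N"
        "i + 1 \<in> gens N"
    using assms(3) unfolding relators_def by blast
  then show ?thesis
  proof cases
    case square
    have "perm_of_word (a @ [i, i] @ c) = perm_of_word (a @ c)"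
      by (simp add: perm_of_word_append comp_assoc[symmetric])
    then have "\<not> reduced_word N w (a @ [i, i] @ c)"
      using reduced_word_length_le[of N w "a @ [i, i] @ c" "a @ c"] assms(1,2)
      by (auto simp: reduced_word_def)
    then show ?thesis unfolding square(1) by (simp add: fa_mult_wd_wd ycoord_wd)
  next
    case commute
    then have "reduced_word N w (a @ [i, j] @ c) \<longleftrightarrow> reduced_word N w (a @ [j, i] @ c)"
      using simple_commute[OF commute(4)] by (intro same_reduced) auto
    then show ?thesis unfolding commute(1) relator_diff by (simp add: ycoord_diff ycoord_wd)
  next
    case braid
    then have "reduced_word N w (a @ [i, i + 1, i] @ c) \<longleftrightarrow> reduced_word N w (a @ [i + 1, i, i + 1] @ c)"
      using simple_braid[of i] by (intro same_reduced) (auto simp: comp_assoc)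
    then show ?thesis unfolding braid(1) relator_diff by (simp add: ycoord_diff ycoord_wd)
  qed
qed

lemma ycoord_ncideal:
  assumes "x \<in> ncideal N"
  shows "ycoord N w x = 0"
  using assms unfolding ncideal_def
proof (induction rule: lspan_induct)
  case zero
  show ?case by (simp add: ycoord_def)
next
  case (base b)
  then show ?case using ycoord_relator by blast
next
  case (lin x y a)
  then show ?case by (simp add: ycoord_lin)
qed

theorem ncfree_cong_Yw_expansion:
  assumes "x \<in> ncfree N"
  shows "nc_cong N x (\<lambda>v. \<Sum>w\<in>symgrp N. ycoord N w x * Yw N w v)"
  using assms unfolding ncfree_def
proof (induction rule: lspan_induct)
  case zero
  show ?case using nc_cong_refl by (simp add: ycoord_def)
next
  case (lin x y a)
  let ?E = "\<lambda>x v. \<Sum>w\<in>symgrp N. ycoord N w x * Yw N w v"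
  have "?E (\<lambda>v. a * x v + y v) v = a * ?E x v + ?E y v" for v
    unfolding ycoord_lin by (simp add: sum.distrib sum_distrib_left algebra_simps)
  then have "(\<lambda>v. a * x v + y v - ?E (\<lambda>v. a * x v + y v) v)
      = (\<lambda>v. a * (x v - ?E x v) + (y v - ?E y v))"
    by (simp add: algebra_simps)
  moreover have "(\<lambda>v. a * (x v - ?E x v) + (y v - ?E y v)) \<in> ncideal N"
    using lin unfolding nc_cong_def ncideal_def by (rule lspan_lin)
  ultimately show ?case unfolding nc_cong_def by simp
next
  case (base b)
  then obtain u where u: "b = wd u" "set u \<subseteq> gens N" by blast
  have "(\<lambda>v. \<Sum>w\<in>symgrp N. ycoord N w (wd u) * Yw N w v)
      = (\<lambda>v. \<Sum>w\<in>symgrp N. if w = perm_of_word u then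
              (if reduced_word N (perm_of_word u) u then Yw N w v else 0) else 0)"
    unfolding ycoord_wd by (intro ext sum.cong) (auto simp: reduced_word_def)
  also have "\<dots> = (if reduced_word N (perm_of_word u) u then Yw N (perm_of_word u) else (\<lambda>v. 0))"
    using finite_symgrp perm_of_word_symgrp[OF u(2)] by auto
  finally show ?case
    using reduced_word_cong_Yw nonreduced_word_ncideal[OF u(2)] u(1)
    by (simp add: nc_cong_def)
qed

corollary ncideal_if_ycoords_zero:
  assumes "x \<in> ncfree N" "\<And>w. w \<in> symgrp N \<Longrightarrow> ycoord N w x = 0"
  shows "x \<in> ncideal N"
  using ncfree_cong_Yw_expansion[OF assms(1)] assms(2) by (simp add: nc_cong_def)

lemma gamma_gens_eq: "gamma_gens a b = gens (a + b) - {a}"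
proof (rule set_eqI)
  fix x
  show "x \<in> gamma_gens a b \<longleftrightarrow> x \<in> gens (a + b) - {a}"
  proof
    assume "x \<in> gens (a + b) - {a}"
    then show "x \<in> gamma_gens a b"
      unfolding gamma_gens_def
      by (cases "x < a") (auto simp: gens_def intro!: image_eqI[of x _ "x - a"])
  qed (auto simp: gamma_gens_def gens_def)
qed

lemma young_simple:
  assumes "i \<in> gens (a + b)" "i \<noteq> a"
  shows "simple i \<in> young a b"
proof -
  have "simple i ` {1..a} = {1..a}"
  proof (cases "i < a")
    case True
    then show ?thesis using assms unfolding simple_def by (simp add: gens_def)
  next
    case False
    then have "simple i x = x" if "x \<in> {1..a}" for x
      using that assms(2) by (auto simp: simple_apply)
    then show ?thesis by simp
  qed
  then show ?thesis using simple_permutes[OF assms(1)] by (simp add: young_def)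
qed

lemma young_comp: "p \<in> young a b \<Longrightarrow> q \<in> young a b \<Longrightarrow> p \<circ> q \<in> young a b"
  using image_comp[of p q "{1..a}"] by (auto simp: young_def permutes_compose)

lemma young_id [simp]: "id \<in> young a b"
  by (simp add: young_def)

lemma perm_of_word_young: "set u \<subseteq> gamma_gens a b \<Longrightarrow> perm_of_word u \<in> young a b"
  by (induction u) (auto simp: gamma_gens_eq intro!: young_comp young_simple)

lemma dcoset_self: "w \<in> dcoset n m k l w"
  unfolding dcoset_def by (auto intro!: exI[of _ id])

lemma dcoset_trans:
  assumes "u \<in> dcoset n m k l w" "v \<in> dcoset n m k l u"
  shows "v \<in> dcoset n m k l w"
proof -
  obtain x y where "u = x \<circ> w \<circ> y" "x \<in> young k l" "y \<in> young n m"
    using assms(1) unfolding dcoset_def by blast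
  moreover obtain x' y' where "v = x' \<circ> u \<circ> y'" "x' \<in> young k l" "y' \<in> young n m"
    using assms(2) unfolding dcoset_def by blast
  ultimately have "v = (x' \<circ> x) \<circ> w \<circ> (y \<circ> y')" "x' \<circ> x \<in> young k l" "y \<circ> y' \<in> young n m"
    by (simp_all add: comp_assoc young_comp)
  then show ?thesis unfolding dcoset_def by blast
qed

lemma dcoset_symgrp:
  assumes "n + m = k + l" "w \<in> symgrp (n + m)" "v \<in> dcoset n m k l w"
  shows "v \<in> symgrp (n + m)"
  using assms by (auto simp: dcoset_def young_def symgrp_def intro!: permutes_compose)

definition overlap :: "nat \<Rightarrow> nat \<Rightarrow> (nat \<Rightarrow> nat) \<Rightarrow> nat" where
  "overlap n k w = card (w ` {1..n} \<inter> {1..k})"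

lemma overlap_dcoset:
  assumes "v \<in> dcoset n m k l w"
  shows "overlap n k v = overlap n k w"
proof -
  obtain x y where v: "v = x \<circ> w \<circ> y" and x: "x \<in> young k l" and y: "y \<in> young n m"
    using assms unfolding dcoset_def by blast
  have inj: "inj x" using x unfolding young_def by (auto intro: permutes_inj)
  have "v ` {1..n} = x ` (w ` (y ` {1..n}))" by (simp add: v image_comp)
  then have "v ` {1..n} \<inter> {1..k} = x ` (w ` {1..n}) \<inter> x ` {1..k}"
    using x y by (simp add: young_def)
  also have "\<dots> = x ` (w ` {1..n} \<inter> {1..k})" by (rule image_Int[OF inj, symmetric])
  finally show ?thesis unfolding overlap_def using card_image[OF inj_on_subset[OF inj]] by simp
qed

lemma overlap_split:
  assumes "w \<in> symgrp N" "n \<le> N"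
  shows "w ` {1..n} = (w ` {1..n} \<inter> {1..k}) \<union> (w ` {1..n} \<inter> {Suc k..N})"
    and "overlap n k w + card (w ` {1..n} \<inter> {Suc k..N}) = n"
proof -
  have wp: "w permutes {1..N}" using assms(1) by (simp add: symgrp_def)
  have "w ` {1..n} \<subseteq> w ` {1..N}" using assms(2) by auto
  then show split: "w ` {1..n} = (w ` {1..n} \<inter> {1..k}) \<union> (w ` {1..n} \<inter> {Suc k..N})"
    using permutes_image[OF wp] by auto
  have "card (w ` {1..n}) = n" using card_image[OF inj_on_subset[OF permutes_inj[OF wp]]] by simp
  then show "overlap n k w + card (w ` {1..n} \<inter> {Suc k..N}) = n"
    unfolding overlap_def by (subst (asm) split, subst (asm) card_Un_disjoint) auto
qed

lemma overlap_bounds: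
  assumes "n + m = k + l" "w \<in> symgrp (n + m)"
  shows "n - l \<le> overlap n k w" "overlap n k w \<le> min n k"
proof -
  have "card (w ` {1..n} \<inter> {Suc k..n + m}) \<le> card {Suc k..n + m}"
    by (rule card_mono) auto
  then show "n - l \<le> overlap n k w" using overlap_split(2)[OF assms(2), of n k] assms(1) by simp
  have "overlap n k w \<le> card {1..k}" unfolding overlap_def by (rule card_mono) auto
  then show "overlap n k w \<le> min n k" using overlap_split(2)[OF assms(2), of n k] by simp
qed

lemma permutes_image_exists:
  assumes "finite S" "A \<subseteq> S" "B \<subseteq> S" "card A = card B"
  shows "\<exists>p. p permutes S \<and> p ` A = B"
proof -
  have fin: "finite A" "finite B" using assms finite_subset by auto
  obtain f where f: "bij_betw f A B" using finite_same_card_bij[OF fin assms(4)] by blast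
  have "card (S - A) = card (S - B)"
    using assms card_Diff_subset[OF fin(1) assms(2)] card_Diff_subset[OF fin(2) assms(3)] by simp
  then obtain g where g: "bij_betw g (S - A) (S - B)"
    using finite_same_card_bij assms(1) by blast
  define p where "p x = (if x \<in> A then f x else if x \<in> S then g x else x)" for x
  have "bij_betw p A B" using f unfolding p_def by (rule bij_betw_cong[THEN iffD1, rotated]) auto
  moreover have "bij_betw p (S - A) (S - B)"
    using g unfolding p_def by (rule bij_betw_cong[THEN iffD1, rotated]) auto
  ultimately have "bij_betw p (A \<union> (S - A)) (B \<union> (S - B))" by (rule bij_betw_combine) auto
  then have "bij_betw p S S" using assms(2,3) by (simp add: Un_absorb1)
  moreover have "p x = x" if "x \<notin> S" for x using that assms(2) by (auto simp: p_def)
  ultimately have "p permutes S" by (rule bij_imp_permutes)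
  then show ?thesis using \<open>bij_betw p A B\<close> by (auto simp: bij_betw_def)
qed

lemma overlap_exists:
  assumes "n + m = k + l" "n - l \<le> r" "r \<le> min n k"
  shows "\<exists>v \<in> symgrp (n + m). overlap n k v = r"
proof -
  define X where "X = {1..r} \<union> {Suc k..k + (n - r)}"
  have "card X = n" unfolding X_def using assms by (subst card_Un_disjoint) auto
  moreover have "X \<subseteq> {1..n + m}" unfolding X_def using assms by auto
  ultimately
  obtain p where p: "p permutes {1..n + m}" "p ` {1..n} = X"
    using permutes_image_exists[of "{1..n + m}" "{1..n}" X] by auto
  have "X \<inter> {1..k} = {1..r}" unfolding X_def using assms by auto
  then show ?thesis using p by (auto simp: symgrp_def overlap_def intro!: bexI[of _ p])
qed

subsection \<open>Minimal double coset representatives\<close>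

lemma downward_closed_eq_atLeastLessThan:
  fixes S :: "nat set"
  assumes "finite S" "S \<subseteq> {a..}" "\<And>j j'. j \<in> S \<Longrightarrow> a \<le> j' \<Longrightarrow> j' \<le> j \<Longrightarrow> j' \<in> S"
  shows "S = {a..<a + card S}"
proof (cases "S = {}")
  case False
  have "Max S \<in> S" using assms(1) False by simp
  then have S: "S = {a..Max S}" using assms by (auto intro: Max_ge)
  moreover have "a \<le> Max S" using \<open>Max S \<in> S\<close> assms(2) by auto
  moreover have "card S = Suc (Max S) - a" by (subst S) simp
  ultimately have "a + card S = Suc (Max S)" by simp
  then show ?thesis using S by (simp add: atLeastLessThanSuc_atLeastAtMost)
qed simp

lemma permutes_eq_if_strict_mono_on_blocks:
  assumes p: "p permutes {1..N}" "strict_mono_on {1..n} p" "strict_mono_on {Suc n..N} p"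
    and q: "q permutes {1..N}" "strict_mono_on {1..n} q" "strict_mono_on {Suc n..N} q"
    and image: "p ` {1..n} = q ` {1..n}"
  shows "p = q"
proof
  fix x
  have upper: "r ` {Suc n..N} = {1..N} - r ` {1..n}" if "r permutes {1..N}" for r
  proof -
    have "r ` {Suc n..N} = r ` ({1..N} - {1..n})" by (rule arg_cong[where f = "image r"]) auto
    then show ?thesis
      using image_set_diff[OF permutes_inj[OF that]] permutes_image[OF that] by simp
  qed
  consider "x \<in> {1..n}" | "x \<in> {Suc n..N}" | "x \<notin> {1..N}" by fastforce
  then show "p x = q x"
  proof cases
    case 1
    then show ?thesis using strict_mono_on_image_eq[OF p(2) q(2) image] by simp
  next
    case 2
    have "p ` {Suc n..N} = q ` {Suc n..N}" using upper[OF p(1)] upper[OF q(1)] image by simp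
    then show ?thesis using strict_mono_on_image_eq[OF p(3) q(3)] 2 by simp
  next
    case 3
    then show ?thesis using permutes_not_in[OF p(1)] permutes_not_in[OF q(1)] by simp
  qed
qed

lemma image_Int_strict_mono_inv:
  assumes w: "w \<in> symgrp N" and mono: "strict_mono_on {a..b} (inv w)"
    and ab: "1 \<le> a" "b \<le> N"
  shows "w ` {1..n} \<inter> {a..b} = {a..<a + card (w ` {1..n} \<inter> {a..b})}"
proof (rule downward_closed_eq_atLeastLessThan)
  have wp: "w permutes {1..N}" using w by (simp add: symgrp_def)
  fix j j' assume j: "j \<in> w ` {1..n} \<inter> {a..b}" and j': "a \<le> j'" "j' \<le> j"
  then have "inv w j \<in> {1..n}" using permutes_inverses(2)[OF wp] by auto
  moreover have "inv w j' \<le> inv w j"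
  proof -
    have "j \<in> {a..b}" using j by blast
    then show ?thesis using strict_mono_onD[OF mono, of j' j] j' by (cases "j' = j") auto
  qed
  moreover have "inv w j' \<in> {1..N}"
    using j j' ab permutes_in_image[OF permutes_inv[OF wp], of j'] by auto
  ultimately have "inv w j' \<in> {1..n}" by auto
  then show "j' \<in> w ` {1..n} \<inter> {a..b}"
    using j j' permutes_inverses(1)[OF wp] by (auto intro: image_eqI[of j' _ "inv w j'"])
qed auto

definition doubly_reduced :: "nat \<Rightarrow> nat \<Rightarrow> nat \<Rightarrow> (nat \<Rightarrow> nat) \<Rightarrow> bool" where
  "doubly_reduced N n k w \<longleftrightarrow> (\<forall>i \<in> gens N. i \<noteq> n \<longrightarrow> w i < w (Suc i))
     \<and> (\<forall>j \<in> gens N. j \<noteq> k \<longrightarrow> inv w j < inv w (Suc j))"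

lemma doubly_reduced_strict_mono_on:
  assumes "doubly_reduced N n k w" "n \<le> N" "k \<le> N"
  shows "strict_mono_on {1..n} w" "strict_mono_on {Suc n..N} w"
    and "strict_mono_on {1..k} (inv w)" "strict_mono_on {Suc k..N} (inv w)"
  using assms by (auto simp: doubly_reduced_def gens_def intro!: strict_mono_on_atLeastAtMost_Suc)

lemma doubly_reduced_image:
  assumes w: "w \<in> symgrp N" "doubly_reduced N n k w" and nk: "n \<le> N" "k \<le> N"
  shows "w ` {1..n} = {1..<Suc (overlap n k w)} \<union> {Suc k..<Suc k + (n - overlap n k w)}"
proof -
  note mono = doubly_reduced_strict_mono_on[OF w(2) nk]
  have "w ` {1..n} \<inter> {1..k} = {1..<Suc (overlap n k w)}"
    using image_Int_strict_mono_inv[OF w(1) mono(3)] nk by (simp add: overlap_def)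
  moreover have "w ` {1..n} \<inter> {Suc k..N} = {Suc k..<Suc k + (n - overlap n k w)}"
  proof -
    have card: "card (w ` {1..n} \<inter> {Suc k..N}) = n - overlap n k w"
      using overlap_split(2)[OF w(1) nk(1), of k] by simp
    have "w ` {1..n} \<inter> {Suc k..N} = {Suc k..<Suc k + card (w ` {1..n} \<inter> {Suc k..N})}"
      by (rule image_Int_strict_mono_inv[OF w(1) mono(4)]) simp_all
    then show ?thesis unfolding card .
  qed
  ultimately show ?thesis using overlap_split(1)[OF w(1) nk(1), of k] by simp
qed

lemma doubly_reduced_eq:
  assumes "w \<in> symgrp N" "doubly_reduced N n k w" "w' \<in> symgrp N" "doubly_reduced N n k w'"
    and "n \<le> N" "k \<le> N" "overlap n k w = overlap n k w'"
  shows "w = w'"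
  using permutes_eq_if_strict_mono_on_blocks
    doubly_reduced_strict_mono_on[OF assms(2,5,6)] doubly_reduced_strict_mono_on[OF assms(4,5,6)]
    doubly_reduced_image[OF assms(1,2,5,6)] doubly_reduced_image[OF assms(3,4,5,6)] assms(1,3,7)
  by (simp add: symgrp_def)

lemma minreps_symgrp: "w \<in> minreps n m k l \<Longrightarrow> w \<in> symgrp (n + m)"
  by (simp add: minreps_def)

lemma finite_minreps: "finite (minreps n m k l)"
  by (rule finite_subset[OF _ finite_symgrp]) (auto simp: minreps_def)

lemma minreps_n_inversions_le:
  assumes "n + m = k + l" "w \<in> minreps n m k l" "v \<in> dcoset n m k l w"
  shows "n_inversions (n + m) w \<le> n_inversions (n + m) v"
proof -
  have "w \<in> symgrp (n + m)" "v \<in> symgrp (n + m)"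
    using assms minreps_symgrp dcoset_symgrp by blast+
  moreover have "len (n + m) w \<le> len (n + m) v" using assms(2,3) by (simp add: minreps_def)
  ultimately show ?thesis by (simp add: len_eq_n_inversions)
qed

lemma minreps_doubly_reduced:
  assumes NE: "n + m = k + l" and w: "w \<in> minreps n m k l"
  shows "doubly_reduced (n + m) n k w"
  unfolding doubly_reduced_def
proof (intro conjI ballI impI)
  have wS: "w \<in> symgrp (n + m)" using w by (rule minreps_symgrp)
  fix i assume i: "i \<in> gens (n + m)" "i \<noteq> n"
  have "w \<circ> simple i \<in> dcoset n m k l w"
    unfolding dcoset_def using young_simple[OF i] by (intro CollectI exI[of _ id] exI[of _ "simple i"]) simp
  then have "\<not> w (Suc i) < w i"
    using minreps_n_inversions_le[OF NE w] n_inversions_comp_simple(2)[OF wS i(1)] by fastforce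
  then show "w i < w (Suc i)" using symgrp_apply_neq[OF wS, of i "Suc i"] by linarith
next
  have wS: "w \<in> symgrp (n + m)" using w by (rule minreps_symgrp)
  fix j assume j: "j \<in> gens (n + m)" "j \<noteq> k"
  have "simple j \<circ> w \<in> dcoset n m k l w"
    unfolding dcoset_def using young_simple[of j k l] j NE
    by (intro CollectI exI[of _ "simple j"] exI[of _ id]) simp
  then have "\<not> inv w (Suc j) < inv w j"
    using minreps_n_inversions_le[OF NE w] n_inversions_simple_comp(2)[OF wS j(1)] by fastforce
  moreover have "inv w j \<noteq> inv w (Suc j)" using symgrp_apply_neq[OF symgrp_inv[OF wS]] by simp
  ultimately show "inv w j < inv w (Suc j)" by linarith
qed

lemma minreps_eq_if_overlap_eq:
  assumes "n + m = k + l" "w \<in> minreps n m k l" "w' \<in> minreps n m k l"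
    and "overlap n k w = overlap n k w'"
  shows "w = w'"
  using doubly_reduced_eq[OF minreps_symgrp[OF assms(2)] minreps_doubly_reduced[OF assms(1,2)]
      minreps_symgrp[OF assms(3)] minreps_doubly_reduced[OF assms(1,3)]] assms(1,4)
  by simp

lemma minreps_exists_overlap:
  assumes NE: "n + m = k + l" and r: "n - l \<le> r" "r \<le> min n k"
  shows "\<exists>w \<in> minreps n m k l. overlap n k w = r"
proof -
  obtain v where v: "v \<in> symgrp (n + m)" "overlap n k v = r" using overlap_exists[OF NE r] by blast
  let ?D = "dcoset n m k l v"
  have D: "?D \<subseteq> symgrp (n + m)" using dcoset_symgrp[OF NE v(1)] by blast
  then have "finite ?D" using finite_subset finite_symgrp by blast
  moreover have "v \<in> ?D" by (rule dcoset_self)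
  ultimately obtain w where w: "w \<in> ?D" "\<And>u. u \<in> ?D \<Longrightarrow> n_inversions (n + m) w \<le> n_inversions (n + m) u"
    using arg_min_if_finite[of ?D "n_inversions (n + m)"] by (metis empty_iff not_le)
  have "w \<in> minreps n m k l"
    unfolding minreps_def
  proof (intro CollectI conjI ballI)
    show wS: "w \<in> symgrp (n + m)" using w(1) D by blast
    fix u assume "u \<in> dcoset n m k l w"
    then have "u \<in> ?D" "u \<in> symgrp (n + m)" using dcoset_trans[OF w(1)] D by blast+
    then show "len (n + m) w \<le> len (n + m) u" using w(2) wS by (simp add: len_eq_n_inversions)
  qed
  then show ?thesis using overlap_dcoset[OF w(1)] v(2) by auto
qed

lemma doubly_reduced_minreps:
  assumes NE: "n + m = k + l" and z: "z \<in> symgrp (n + m)" "doubly_reduced (n + m) n k z"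
  shows "z \<in> minreps n m k l"
proof -
  obtain w where w: "w \<in> minreps n m k l" "overlap n k w = overlap n k z"
    using minreps_exists_overlap[OF NE overlap_bounds[OF NE z(1)]] by blast
  have "w = z"
    using doubly_reduced_eq[OF minreps_symgrp[OF w(1)] minreps_doubly_reduced[OF NE w(1)] z] w(2) NE
    by simp
  then show ?thesis using w(1) by simp
qed

theorem card_minreps:
  assumes NE: "n + m = k + l"
  shows "card (minreps n m k l) = min (min n m) (min k l) + 1"
proof -
  have "bij_betw (overlap n k) (minreps n m k l) {n - l..min n k}"
    unfolding bij_betw_def
  proof
    show "inj_on (overlap n k) (minreps n m k l)"
      using minreps_eq_if_overlap_eq[OF NE] by (blast intro: inj_onI)
    show "overlap n k ` minreps n m k l = {n - l..min n k}"
      using overlap_bounds[OF NE minreps_symgrp] minreps_exists_overlap[OF NE]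
      by (fastforce simp: image_iff)
  qed
  then have "card (minreps n m k l) = card {n - l..min n k}" by (rule bij_betw_same_card)
  also have "\<dots> = min (min n m) (min k l) + 1" using NE by (simp add: min_def) arith
  finally show ?thesis .
qed

lemma minreps_dcoset_unique:
  assumes "n + m = k + l" "w \<in> minreps n m k l" "w' \<in> minreps n m k l"
    and "z \<in> dcoset n m k l w" "z \<in> dcoset n m k l w'"
  shows "w = w'"
  using minreps_eq_if_overlap_eq[OF assms(1-3)] overlap_dcoset[OF assms(4)] overlap_dcoset[OF assms(5)]
  by simp

definition dcoset_factorization ::
    "nat \<Rightarrow> nat \<Rightarrow> nat \<Rightarrow> nat \<Rightarrow> (nat \<Rightarrow> nat) \<Rightarrow> nat list \<Rightarrow> (nat \<Rightarrow> nat) \<Rightarrow> nat list \<Rightarrow> bool" where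
  "dcoset_factorization n m k l z u w v \<longleftrightarrow>
     set u \<subseteq> gamma_gens k l \<and> set v \<subseteq> gamma_gens n m \<and> w \<in> minreps n m k l \<and>
     z = perm_of_word u \<circ> w \<circ> perm_of_word v \<and>
     length u + n_inversions (n + m) w + length v = n_inversions (n + m) z"

lemma dcoset_factorization_snoc:
  assumes "dcoset_factorization n m k l (z \<circ> simple i) u w v" "i \<in> gamma_gens n m"
    and "Suc (n_inversions (n + m) (z \<circ> simple i)) = n_inversions (n + m) z"
  shows "dcoset_factorization n m k l z u w (v @ [i])"
proof -
  have factor: "z \<circ> simple i = perm_of_word u \<circ> w \<circ> perm_of_word v"
    using assms(1) by (simp add: dcoset_factorization_def)
  have "z = perm_of_word u \<circ> w \<circ> perm_of_word (v @ [i])"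
    using arg_cong[OF factor, of "\<lambda>p. p \<circ> simple i"] by (simp add: perm_of_word_snoc comp_assoc)
  then show ?thesis using assms by (simp add: dcoset_factorization_def)
qed

lemma dcoset_factorization_Cons:
  assumes "dcoset_factorization n m k l (simple j \<circ> z) u w v" "j \<in> gamma_gens k l"
    and "Suc (n_inversions (n + m) (simple j \<circ> z)) = n_inversions (n + m) z"
  shows "dcoset_factorization n m k l z (j # u) w v"
proof -
  have "z = simple j \<circ> (simple j \<circ> z)" by (simp add: comp_assoc[symmetric])
  then show ?thesis using assms by (simp add: dcoset_factorization_def comp_assoc)
qed

theorem dcoset_factorization_exists:
  assumes NE: "n + m = k + l"
  shows "z \<in> symgrp (n + m) \<Longrightarrow> \<exists>u w v. dcoset_factorization n m k l z u w v"
proof (induction "n_inversions (n + m) z" arbitrary: z rule: less_induct)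
  case less
  let ?N = "n + m"
  consider (right) i where "i \<in> gens ?N" "i \<noteq> n" "z (Suc i) < z i"
    | (left) j where "j \<in> gens ?N" "j \<noteq> k" "inv z (Suc j) < inv z j"
    | (reduced) "doubly_reduced ?N n k z"
    unfolding doubly_reduced_def
    using symgrp_apply_neq[OF less.prems] symgrp_apply_neq[OF symgrp_inv[OF less.prems]]
    by (metis n_not_Suc_n nat_neq_iff)
  then show ?case
  proof cases
    case right
    note shorter = n_inversions_comp_simple(2)[OF less.prems right(1,3)]
    then obtain u w v where "dcoset_factorization n m k l (z \<circ> simple i) u w v"
      using less.hyps[OF _ symgrp_comp[OF less.prems simple_symgrp[OF right(1)]]] by auto
    moreover have "i \<in> gamma_gens n m" using right by (simp add: gamma_gens_eq)
    ultimately show ?thesis using dcoset_factorization_snoc shorter by blast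
  next
    case left
    note shorter = n_inversions_simple_comp(2)[OF less.prems left(1,3)]
    then obtain u w v where "dcoset_factorization n m k l (simple j \<circ> z) u w v"
      using less.hyps[OF _ symgrp_comp[OF simple_symgrp[OF left(1)] less.prems]] by auto
    moreover have "j \<in> gamma_gens k l" using left NE by (simp add: gamma_gens_eq)
    ultimately show ?thesis using dcoset_factorization_Cons shorter by blast
  next
    case reduced
    then have "z \<in> minreps n m k l" using doubly_reduced_minreps[OF NE less.prems] by simp
    then show ?thesis by (auto simp: dcoset_factorization_def intro!: exI[of _ "[]"])
  qed
qed

subsection \<open>The bimodule decomposition\<close>

lemma gamma_gens_subset: "gamma_gens a b \<subseteq> gens (a + b)"
  by (auto simp: gamma_gens_eq)

lemma Yw_genbimod_generator:
  assumes "set u \<subseteq> gamma_gens k l" "set v \<subseteq> gamma_gens n m" "Yw (n + m) w = wd y"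
  shows "wd (u @ y @ v) \<in> genbimod n m k l w"
proof -
  have "wd (u @ y @ v) = fa_mult (fa_mult (wd u) (Yw (n + m) w)) (wd v)"
    using assms(3) by (simp add: fa_mult_wd_wd)
  then show ?thesis unfolding genbimod_def using assms(1,2) by (blast intro: lspan_base)
qed

lemma genbimod_ncfree:
  assumes NE: "n + m = k + l" and w: "w \<in> symgrp (n + m)"
  shows "genbimod n m k l w \<subseteq> ncfree (n + m)"
proof
  fix g assume "g \<in> genbimod n m k l w"
  then show "g \<in> ncfree (n + m)"
    unfolding genbimod_def ncfree_def
  proof (rule lspan_trans, safe)
    fix u v assume uv: "set u \<subseteq> gamma_gens k l" "set v \<subseteq> gamma_gens n m"
    obtain y where y: "Yw (n + m) w = wd y" "reduced_word (n + m) w y"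
      using Yw_reduced_word[OF w] by blast
    have "set (u @ y @ v) \<subseteq> gens (n + m)"
      using uv y(2) gamma_gens_subset[of k l] gamma_gens_subset[of n m] NE
      by (auto simp: reduced_word_def)
    then show "fa_mult (fa_mult (wd u) (Yw (n + m) w)) (wd v) \<in> lspan (wd ` {u. set u \<subseteq> gens (n + m)})"
      using y(1) by (auto simp: fa_mult_wd_wd intro: lspan_base)
  qed
qed

lemma ycoord_genbimod:
  assumes w: "w \<in> symgrp (n + m)" and z: "z \<notin> dcoset n m k l w"
    and g: "g \<in> genbimod n m k l w"
  shows "ycoord (n + m) z g = 0"
  using g unfolding genbimod_def
proof (induction rule: lspan_induct)
  case zero
  show ?case by (simp add: ycoord_def)
next
  case (lin x y a)
  then show ?case by (simp add: ycoord_lin)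
next
  case (base b)
  then obtain u v where uv: "b = fa_mult (fa_mult (wd u) (Yw (n + m) w)) (wd v)"
    "set u \<subseteq> gamma_gens k l" "set v \<subseteq> gamma_gens n m" by blast
  obtain y where y: "Yw (n + m) w = wd y" "reduced_word (n + m) w y"
    using Yw_reduced_word[OF w] by blast
  have "\<not> reduced_word (n + m) z (u @ y @ v)"
  proof
    assume "reduced_word (n + m) z (u @ y @ v)"
    then have "z = perm_of_word u \<circ> w \<circ> perm_of_word v"
      using y(2) by (auto simp: reduced_word_def perm_of_word_append comp_assoc)
    then have "z \<in> dcoset n m k l w"
      unfolding dcoset_def using perm_of_word_young uv(2,3) by blast
    then show False using z by simp
  qed
  then show ?case unfolding uv(1) y(1) by (simp add: fa_mult_wd_wd ycoord_wd)
qed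

lemma reduced_word_genbimod:
  assumes NE: "n + m = k + l" and z: "z \<in> symgrp (n + m)"
  shows "\<exists>w \<in> minreps n m k l. \<exists>x. reduced_word (n + m) z x \<and> wd x \<in> genbimod n m k l w"
proof -
  obtain u w v where "dcoset_factorization n m k l z u w v"
    using dcoset_factorization_exists[OF NE z] by blast
  then have uvw: "set u \<subseteq> gamma_gens k l" "set v \<subseteq> gamma_gens n m"
    "w \<in> minreps n m k l" "z = perm_of_word u \<circ> w \<circ> perm_of_word v"
    "length u + n_inversions (n + m) w + length v = n_inversions (n + m) z"
    by (simp_all add: dcoset_factorization_def)
  obtain y where y: "Yw (n + m) w = wd y" "reduced_word (n + m) w y"
    using Yw_reduced_word[OF minreps_symgrp[OF uvw(3)]] by blast
  have "reduced_word (n + m) z (u @ y @ v)"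
    using uvw y(2) gamma_gens_subset[of k l] gamma_gens_subset[of n m] NE
    by (auto simp: reduced_word_iff perm_of_word_append comp_assoc)
  then show ?thesis using Yw_genbimod_generator[OF uvw(1,2) y(1)] uvw(3) by blast
qed

theorem ncfree_sum_genbimod:
  assumes NE: "n + m = k + l" and x: "x \<in> ncfree (n + m)"
  shows "\<exists>f. (\<forall>w \<in> minreps n m k l. f w \<in> genbimod n m k l w)
          \<and> (\<lambda>u. x u - (\<Sum>w \<in> minreps n m k l. f w u)) \<in> ncideal (n + m)"
proof -
  let ?N = "n + m" and ?S = "symgrp (n + m)" and ?M = "minreps n m k l"
  obtain W word where W: "\<And>z. z \<in> ?S \<Longrightarrow> W z \<in> ?M"
    and word: "\<And>z. z \<in> ?S \<Longrightarrow> reduced_word ?N z (word z)"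
      "\<And>z. z \<in> ?S \<Longrightarrow> wd (word z) \<in> genbimod n m k l (W z)"
    using reduced_word_genbimod[OF NE] by metis
  let ?y = "\<lambda>u. \<Sum>z\<in>?S. ycoord ?N z x * wd (word z) u"
  define f where "f w = (\<lambda>u. \<Sum>z \<in> {z \<in> ?S. W z = w}. ycoord ?N z x * wd (word z) u)" for w
  have "f w \<in> genbimod n m k l w" for w
    unfolding f_def genbimod_def
    by (rule lspan_sum) (use finite_symgrp word(2) in \<open>auto simp: genbimod_def\<close>)
  moreover have "(\<Sum>w\<in>?M. f w u) = ?y u" for u
    unfolding f_def
    by (rule sum.group) (use finite_symgrp finite_minreps W in auto)
  moreover have "(\<lambda>u. x u - ?y u) \<in> ncideal ?N"
  proof (rule ncideal_if_ycoords_zero)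
    have "wd (word z) \<in> ncfree ?N" if "z \<in> ?S" for z
      using word(1)[OF that] unfolding ncfree_def by (auto simp: reduced_word_def intro: lspan_base)
    then show "(\<lambda>u. x u - ?y u) \<in> ncfree ?N"
      using x unfolding ncfree_def by (intro lspan_diff lspan_sum finite_symgrp) auto
    fix z' assume z': "z' \<in> ?S"
    have "ycoord ?N z' ?y = (\<Sum>z\<in>?S. if z' = z then ycoord ?N z x else 0)"
      unfolding ycoord_sum ycoord_scale
    proof (rule sum.cong)
      fix z assume "z \<in> ?S"
      then show "ycoord ?N z x * ycoord ?N z' (wd (word z)) = (if z' = z then ycoord ?N z x else 0)"
        using ycoord_wd_reduced[OF word(1), of z z'] by simp
    qed simp
    then show "ycoord ?N z' (\<lambda>u. x u - ?y u) = 0"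
      using z' by (simp add: ycoord_diff finite_symgrp)
  qed
  ultimately show ?thesis by (intro exI[of _ f]) simp
qed

theorem genbimod_sum_ncideal:
  assumes NE: "n + m = k + l"
    and f: "\<forall>w \<in> minreps n m k l. f w \<in> genbimod n m k l w"
    and sum: "(\<lambda>u. \<Sum>w \<in> minreps n m k l. f w u) \<in> ncideal (n + m)"
  shows "\<forall>w \<in> minreps n m k l. f w \<in> ncideal (n + m)"
proof
  let ?N = "n + m" and ?M = "minreps n m k l"
  fix w assume w: "w \<in> ?M"
  have wS: "w \<in> symgrp ?N" using w by (rule minreps_symgrp)
  show "f w \<in> ncideal ?N"
  proof (rule ncideal_if_ycoords_zero)
    show "f w \<in> ncfree ?N" using genbimod_ncfree[OF NE wS] f w by blast
    fix z assume z: "z \<in> symgrp ?N"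
    show "ycoord ?N z (f w) = 0"
    proof (cases "z \<in> dcoset n m k l w")
      case False
      then show ?thesis using ycoord_genbimod[OF wS] f w by blast
    next
      case True
      have others: "ycoord ?N z (f w') = 0" if "w' \<in> ?M - {w}" for w'
        using ycoord_genbimod[OF minreps_symgrp] minreps_dcoset_unique[OF NE w _ True] f that
        by blast
      have "ycoord ?N z (\<lambda>u. \<Sum>w \<in> ?M. f w u) = ycoord ?N z (f w)"
        unfolding ycoord_sum using finite_minreps w others by (simp add: sum.remove)
      then show ?thesis using ycoord_ncideal[OF sum] by simp
    qed
  qed
qed

theorem mainTheorem15:
  fixes n m k l :: nat
  assumes "n + m = k + l"
  shows "card (minreps n m k l) = min (min n m) (min k l) + 1
    \<and> (\<forall>x \<in> ncfree (n + m). \<exists>f. (\<forall>w \<in> minreps n m k l. f w \<in> genbimod n m k l w)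
          \<and> (\<lambda>u. x u - (\<Sum>w \<in> minreps n m k l. f w u)) \<in> ncideal (n + m))
    \<and> (\<forall>f. (\<forall>w \<in> minreps n m k l. f w \<in> genbimod n m k l w)
          \<and> (\<lambda>u. \<Sum>w \<in> minreps n m k l. f w u) \<in> ncideal (n + m)
          \<longrightarrow> (\<forall>w \<in> minreps n m k l. f w \<in> ncideal (n + m)))"
  using card_minreps[OF assms] ncfree_sum_genbimod[OF assms] genbimod_sum_ncideal[OF assms]
  by blast

end
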